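(* Let $T$ be a tree on $n$ nodes, rooted at some node $r$, and let $k\ge1$. Call layer $i$ the set of nodes at distance exactly $i$ from $r$. Let $n_i$ be the number of nodes in layer $i$ (so $n_0=1$), and let $h$ be the depth of $T$, i.e., the largest distance from $r$ to a node. Then $$M^T_{k,n}\le \sum_{i=0}^h M^C_{k,n_i}.$$
   Context: For a graph $G$ on $n$ nodes, a measurement matrix for $G$ is a $0$-$1$ matrix with columns indexed by the nodes in which every nonzero row has a support that induces a connected subgraph of $G$. A vector is $k$-sparse if it has at most $k$ nonzero entries. $A$ identifies all $k$-sparse vectors if $Ax_1\ne Ax_2$ for every two distinct $k$-sparse $x_1,x_2\in\mathbb{R}^n$. $M^G_{k,n}$ is the minimum number of rows of a measurement matrix for $G$ that identifies all $k$-sparse vectors. $M^C_{k,N}$ is the minimum number of rows of an arbitrary $0$-$1$ matrix with $N$ columns that identifies all $k$-sparse vectors in $\mathbb{R}^N$. *)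

theory Defs
  imports Complex_Main
begin

definition graph :: "'a set \<Rightarrow> ('a \<Rightarrow> 'a \<Rightarrow> bool) \<Rightarrow> bool" where
  "graph V E \<longleftrightarrow> finite V \<and> (\<forall>u v. E u v \<longrightarrow> u \<in> V \<and> v \<in> V \<and> u \<noteq> v \<and> E v u)"

definition induces_connected :: "('a \<Rightarrow> 'a \<Rightarrow> bool) \<Rightarrow> 'a set \<Rightarrow> bool" where
  "induces_connected E S \<longleftrightarrow> S \<noteq> {} \<and>
     (\<forall>u\<in>S. \<forall>v\<in>S. (\<lambda>x y. E x y \<and> x \<in> S \<and> y \<in> S)\<^sup>*\<^sup>* u v)"

definition is_cycle :: "'a set \<Rightarrow> ('a \<Rightarrow> 'a \<Rightarrow> bool) \<Rightarrow> 'a list \<Rightarrow> bool" where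
  "is_cycle V E cs \<longleftrightarrow> length cs \<ge> 3 \<and> distinct cs \<and> set cs \<subseteq> V \<and>
     (\<forall>i. Suc i < length cs \<longrightarrow> E (cs ! i) (cs ! Suc i)) \<and> E (last cs) (hd cs)"

definition is_tree :: "'a set \<Rightarrow> ('a \<Rightarrow> 'a \<Rightarrow> bool) \<Rightarrow> bool" where
  "is_tree V E \<longleftrightarrow> graph V E \<and> induces_connected E V \<and> (\<nexists>cs. is_cycle V E cs)"

definition gdist :: "('a \<Rightarrow> 'a \<Rightarrow> bool) \<Rightarrow> 'a \<Rightarrow> 'a \<Rightarrow> nat" where
  "gdist E u v = (LEAST d. (E ^^ d) u v)"

definition layer :: "'a set \<Rightarrow> ('a \<Rightarrow> 'a \<Rightarrow> bool) \<Rightarrow> 'a \<Rightarrow> nat \<Rightarrow> 'a set" where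
  "layer V E r i = {v \<in> V. gdist E r v = i}"

definition depth :: "'a set \<Rightarrow> ('a \<Rightarrow> 'a \<Rightarrow> bool) \<Rightarrow> 'a \<Rightarrow> nat" where
  "depth V E r = Max (gdist E r ` V)"

text \<open>A 0-1 matrix with columns indexed by a set C is represented as the list of its rows,
  each row given by its support (a subset of C). The product A x is the list of row sums.\<close>

definition mat_mult :: "'a set list \<Rightarrow> ('a \<Rightarrow> real) \<Rightarrow> real list" where
  "mat_mult A x = map (\<lambda>S. \<Sum>v\<in>S. x v) A"

text \<open>Vectors in R^C: real functions vanishing outside C.  k-sparse: at most k nonzero entries.\<close>
definition sparse_vec :: "'a set \<Rightarrow> nat \<Rightarrow> ('a \<Rightarrow> real) \<Rightarrow> bool" where
  "sparse_vec C k x \<longleftrightarrow> (\<forall>v. v \<notin> C \<longrightarrow> x v = 0) \<and> card {v \<in> C. x v \<noteq> 0} \<le> k"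

definition identifies :: "'a set \<Rightarrow> nat \<Rightarrow> 'a set list \<Rightarrow> bool" where
  "identifies C k A \<longleftrightarrow> (\<forall>x1 x2. sparse_vec C k x1 \<and> sparse_vec C k x2 \<and> x1 \<noteq> x2
      \<longrightarrow> mat_mult A x1 \<noteq> mat_mult A x2)"

definition zero_one_matrix :: "'a set \<Rightarrow> 'a set list \<Rightarrow> bool" where
  "zero_one_matrix C A \<longleftrightarrow> (\<forall>S\<in>set A. S \<subseteq> C)"

definition measurement_matrix :: "'a set \<Rightarrow> ('a \<Rightarrow> 'a \<Rightarrow> bool) \<Rightarrow> 'a set list \<Rightarrow> bool" where
  "measurement_matrix V E A \<longleftrightarrow> zero_one_matrix V A \<and>
     (\<forall>S\<in>set A. S \<noteq> {} \<longrightarrow> induces_connected E S)"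

definition M_G :: "'a set \<Rightarrow> ('a \<Rightarrow> 'a \<Rightarrow> bool) \<Rightarrow> nat \<Rightarrow> nat" where
  "M_G V E k = (LEAST m. \<exists>A. length A = m \<and> measurement_matrix V E A \<and> identifies V k A)"

definition M_C :: "nat \<Rightarrow> nat \<Rightarrow> nat" where
  "M_C k N = (LEAST m. \<exists>A::nat set list. length A = m \<and> zero_one_matrix {..<N} A
                 \<and> identifies {..<N} k A)"

end

theory Submission imports Defs begin

text \<open>
  Root the graph at r and give every vertex w \<noteq> r a parent one level
  closer to r; the descendant set desc v of v collects the vertices whose ancestor
  chain passes through v.  A vector x is determined by its subtree sums
  ssum x v = (\<Sum>w\<in>desc v. x w), and on every layer these subtree sums form a
  k-sparse vector whenever x is k-sparse, because distinct vertices of one layer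
  have disjoint descendant sets.  For a set S of vertices in layer i \<ge> 1 the row
  "V with the subtrees below S removed" is connected (it contains r and is closed
  under taking parents), and its measurement equals the total sum minus the
  subtree sums over S.  Hence one row V together with, for each layer i \<ge> 1,
  an optimal unrestricted identifying matrix for that layer transported into
  pruned rows, is a measurement matrix identifying all k-sparse vectors; its
  length is 1 + \<Sum>i=1..h M_C k n_i \<le> \<Sum>i=0..h M_C k n_i, since M_C k 1 \<ge> 1.
  The file first proves facts about 0-1 matrices, then develops the rooted graph
  inside a locale (only connectivity is needed, not acyclicity), and finally
  assembles the matrix and derives theorem6.
\<close>

subsection \<open>Identifying 0-1 matrices\<close>

lemma mat_mult_eq_iff:
  "mat_mult A x1 = mat_mult A x2 \<longleftrightarrow> (\<forall>S\<in>set A. sum x1 S = sum x2 S)"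
  by (simp add: mat_mult_def)

lemma identifies_iff:
  "identifies C k A \<longleftrightarrow> (\<forall>x1 x2. sparse_vec C k x1 \<and> sparse_vec C k x2 \<and>
      (\<forall>S\<in>set A. sum x1 S = sum x2 S) \<longrightarrow> x1 = x2)"
  unfolding identifies_def mat_mult_eq_iff by blast

lemma identifiesD:
  assumes "identifies C k A" "sparse_vec C k x1" "sparse_vec C k x2"
    and "\<forall>S\<in>set A. sum x1 S = sum x2 S"
  shows "x1 = x2"
  using assms unfolding identifies_iff by simp

text \<open>The minimum defining M_C is attained: the identity matrix always identifies.\<close>
lemma M_C_attained:
  "\<exists>A. length A = M_C k N \<and> zero_one_matrix {..<N} A \<and> identifies {..<N} k A"
proof -
  let ?A = "map (\<lambda>j. {j}) [0..<N]"
  have "zero_one_matrix {..<N} ?A" by (auto simp: zero_one_matrix_def)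
  moreover have "identifies {..<N} k ?A"
    unfolding identifies_iff
  proof (intro allI impI ext, elim conjE)
    fix x1 x2 :: "nat \<Rightarrow> real" and j
    assume "sparse_vec {..<N} k x1" "sparse_vec {..<N} k x2"
      and "\<forall>S\<in>set ?A. sum x1 S = sum x2 S"
    then show "x1 j = x2 j" by (cases "j < N") (auto simp: sparse_vec_def)
  qed
  ultimately have "\<exists>m A. length A = m \<and> zero_one_matrix {..<N} A \<and> identifies {..<N} k A"
    by blast
  then show ?thesis unfolding M_C_def by (rule LeastI_ex)
qed

text \<open>For k \<ge> 1 a single column already needs a row: the unit vector must be told
  apart from zero.  This pays for the extra row V in the construction.\<close>
lemma M_C_pos:
  assumes "1 \<le> k" "1 \<le> N"
  shows "1 \<le> M_C k N"
proof (rule ccontr)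
  assume "\<not> 1 \<le> M_C k N"
  then have "M_C k N = 0" by simp
  then obtain A where A: "A = []" "identifies {..<N} k A" using M_C_attained[of k N] by auto
  let ?e = "\<lambda>j::nat. if j = 0 then 1 else 0 :: real"
  have "{v \<in> {..<N}. ?e v \<noteq> 0} = {0}" using assms by auto
  then have e_sparse: "sparse_vec {..<N} k ?e" using assms by (simp add: sparse_vec_def)
  have zero_sparse: "sparse_vec {..<N} k (\<lambda>_. 0)" by (simp add: sparse_vec_def)
  have "?e = (\<lambda>_. 0)" using identifiesD[OF A(2) e_sparse zero_sparse] A(1) by simp
  then show False using fun_cong[of ?e "\<lambda>_. 0" 0] by simp
qed

lemma identifies_relabel:
  fixes g :: "nat \<Rightarrow> 'a" and L :: "'a set"
  assumes bij: "bij_betw g {..<n} L" and zo: "zero_one_matrix {..<n} A"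
    and id: "identifies {..<n} k A"
  shows "identifies L k (map ((`) g) A)"
  unfolding identifies_iff
proof (intro allI impI, elim conjE)
  fix x1 x2 :: "'a \<Rightarrow> real"
  assume s1: "sparse_vec L k x1" and s2: "sparse_vec L k x2"
    and rows: "\<forall>S\<in>set (map ((`) g) A). sum x1 S = sum x2 S"
  define pull where "pull x j = (if j < n then x (g j) else 0)" for x :: "'a \<Rightarrow> real" and j
  have inj: "inj_on g {..<n}" using bij by (rule bij_betw_imp_inj_on)
  have pull_sum: "sum (pull x) S = sum x (g ` S)" if "S \<in> set A" for x S
  proof -
    have S: "S \<subseteq> {..<n}" using zo that by (simp add: zero_one_matrix_def)
    then have "sum (pull x) S = sum (x \<circ> g) S" by (intro sum.cong) (auto simp: pull_def)
    also have "\<dots> = sum x (g ` S)" using sum.reindex[OF inj_on_subset[OF inj S], of x] by simp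
    finally show ?thesis .
  qed
  have pull_sparse: "sparse_vec {..<n} k (pull x)" if "sparse_vec L k x" for x
  proof -
    have "g ` {j \<in> {..<n}. pull x j \<noteq> 0} \<subseteq> {v \<in> L. x v \<noteq> 0}"
      using bij_betwE[OF bij] by (auto simp: pull_def)
    moreover have "inj_on g {j \<in> {..<n}. pull x j \<noteq> 0}" using inj by (rule inj_on_subset) blast
    moreover have "finite L" using bij_betw_finite[OF bij] by simp
    ultimately have "card {j \<in> {..<n}. pull x j \<noteq> 0} \<le> card {v \<in> L. x v \<noteq> 0}"
      by (intro card_inj_on_le) auto
    then show ?thesis using that by (simp add: sparse_vec_def pull_def)
  qed
  have "\<forall>S\<in>set A. sum (pull x1) S = sum (pull x2) S" using rows pull_sum by simp
  then have "pull x1 = pull x2" by (rule identifiesD[OF id pull_sparse[OF s1] pull_sparse[OF s2]])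
  show "x1 = x2"
  proof
    fix v show "x1 v = x2 v"
    proof (cases "v \<in> L")
      case True
      then have "v \<in> g ` {..<n}" using bij_betw_imp_surj_on[OF bij] by simp
      then obtain j where "j < n" "v = g j" by blast
      then show ?thesis using fun_cong[OF \<open>pull x1 = pull x2\<close>, of j] by (simp add: pull_def)
    next
      case False
      then show ?thesis using s1 s2 by (simp add: sparse_vec_def)
    qed
  qed
qed

lemma M_G_le:
  assumes "measurement_matrix V E B" "identifies V k B"
  shows "M_G V E k \<le> length B"
  unfolding M_G_def by (rule Least_le) (use assms in blast)

subsection \<open>Rooted connected graphs: levels, parents and descendants\<close>

locale rooted_graph =
  fixes V :: "'a set" and E :: "'a \<Rightarrow> 'a \<Rightarrow> bool" and r :: 'a
  assumes graph: "graph V E" and connected: "induces_connected E V" and root: "r \<in> V"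
begin

abbreviation level :: "'a \<Rightarrow> nat" where "level \<equiv> gdist E r"

lemma finite_V: "finite V" using graph by (simp add: graph_def)
lemma edge_sym: "E u v \<Longrightarrow> E v u" using graph by (simp add: graph_def)
lemma edge_in_V: "E u v \<Longrightarrow> u \<in> V \<and> v \<in> V" using graph by (simp add: graph_def)

lemma walk_level: assumes "w \<in> V" shows "(E ^^ level w) r w"
proof -
  have "(\<lambda>x y. E x y \<and> x \<in> V \<and> y \<in> V)\<^sup>*\<^sup>* r w"
    using connected root assms by (simp add: induces_connected_def)
  then have "E\<^sup>*\<^sup>* r w" by (induction rule: rtranclp_induct) auto
  then obtain n where "(E ^^ n) r w" by (blast dest: rtranclp_imp_relpowp)
  then show ?thesis unfolding gdist_def by (rule LeastI)
qed

lemma level_le: "(E ^^ n) r w \<Longrightarrow> level w \<le> n"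
  unfolding gdist_def by (rule Least_le)

lemma level_root: "level r = 0" using level_le[of 0 r] by simp

lemma level_eq_0: "w \<in> V \<Longrightarrow> level w = 0 \<Longrightarrow> w = r"
  using walk_level[of w] by simp

lemma parent_exists:
  assumes "w \<in> V" "level w > 0"
  shows "\<exists>u. u \<in> V \<and> E u w \<and> level u = level w - 1"
proof -
  obtain m where m: "level w = Suc m" using assms by (cases "level w") auto
  have "(E ^^ Suc m) r w" using walk_level[OF assms(1)] m by simp
  then obtain u where u: "(E ^^ m) r u" "E u w" by (rule relpowp_Suc_E)
  have "level u \<le> m" using level_le[OF u(1)] .
  moreover have "(E ^^ Suc (level u)) r w"
    using walk_level[of u] edge_in_V[OF u(2)] u(2) by (meson relpowp_Suc_I)
  then have "level w \<le> Suc (level u)" by (rule level_le)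
  ultimately show ?thesis using u edge_in_V[OF u(2)] m by auto
qed

definition parent :: "'a \<Rightarrow> 'a" where
  "parent w = (SOME u. u \<in> V \<and> E u w \<and> level u = level w - 1)"

lemma parent:
  "w \<in> V \<Longrightarrow> level w > 0 \<Longrightarrow> parent w \<in> V \<and> E (parent w) w \<and> level (parent w) = level w - 1"
  unfolding parent_def by (rule someI_ex) (rule parent_exists)

definition anc :: "nat \<Rightarrow> 'a \<Rightarrow> 'a" where "anc j w = (parent ^^ j) w"

lemma anc_0 [simp]: "anc 0 w = w" by (simp add: anc_def)
lemma anc_Suc: "anc (Suc j) w = parent (anc j w)" by (simp add: anc_def)
lemma anc_add: "anc (a + b) w = anc a (anc b w)" by (simp add: anc_def funpow_add)

lemma anc: "w \<in> V \<Longrightarrow> j \<le> level w \<Longrightarrow> anc j w \<in> V \<and> level (anc j w) = level w - j"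
proof (induction j)
  case (Suc j)
  then have "anc j w \<in> V" "level (anc j w) = level w - j" by auto
  then show ?case using parent[of "anc j w"] Suc.prems by (simp add: anc_Suc)
qed simp

lemma anc_edge: "w \<in> V \<Longrightarrow> j < level w \<Longrightarrow> E (anc (Suc j) w) (anc j w)"
  using anc[of w j] parent[of "anc j w"] by (simp add: anc_Suc)

lemma anc_top: "w \<in> V \<Longrightarrow> anc (level w) w = r"
  using anc[of w "level w"] level_eq_0 by simp

definition desc :: "'a \<Rightarrow> 'a set" where
  "desc v = {w \<in> V. level v \<le> level w \<and> anc (level w - level v) w = v}"

lemma desc_subset: "desc v \<subseteq> V" by (auto simp: desc_def)
lemma finite_desc: "finite (desc v)" using desc_subset finite_V finite_subset by blast
lemma desc_self: "v \<in> V \<Longrightarrow> v \<in> desc v" by (simp add: desc_def)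
lemma desc_root: "desc r = V" using anc_top by (auto simp: desc_def level_root)

lemma desc_anc: "w \<in> V \<Longrightarrow> j \<le> level w \<Longrightarrow> w \<in> desc (anc j w)"
  using anc[of w j] by (simp add: desc_def)

lemma desc_trans:
  assumes "c \<in> desc v" "u \<in> desc c"
  shows "u \<in> desc v"
proof -
  have uV: "u \<in> V" and l1: "level c \<le> level u" and a1: "anc (level u - level c) u = c"
    and l2: "level v \<le> level c" and a2: "anc (level c - level v) c = v"
    using assms by (auto simp: desc_def)
  have "level u - level v = (level c - level v) + (level u - level c)" using l1 l2 by simp
  then have "anc (level u - level v) u = anc ((level c - level v) + (level u - level c)) u"
    by (rule arg_cong)
  also have "\<dots> = v" using a1 a2 by (simp add: anc_add)
  finally show ?thesis using uV l1 l2 by (simp add: desc_def)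
qed

lemma desc_disjoint: "level v = level v' \<Longrightarrow> v \<noteq> v' \<Longrightarrow> desc v \<inter> desc v' = {}"
  by (auto simp: desc_def)

lemma finite_layer: "finite (layer V E r i)" using finite_V by (simp add: layer_def)

lemma sum_desc_union:
  assumes "S \<subseteq> layer V E r i"
  shows "sum x (\<Union>(desc ` S)) = (\<Sum>v\<in>S. sum x (desc v))"
proof (rule sum.UNION_disjoint)
  show "finite S" using finite_subset[OF assms finite_layer] .
  show "\<forall>v\<in>S. \<forall>v'\<in>S. v \<noteq> v' \<longrightarrow> desc v \<inter> desc v' = {}"
  proof (intro ballI impI)
    fix v v' assume "v \<in> S" "v' \<in> S" "v \<noteq> v'"
    moreover from \<open>v \<in> S\<close> \<open>v' \<in> S\<close> have "level v = level v'" using assms by (auto simp: layer_def)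
    ultimately show "desc v \<inter> desc v' = {}" by (intro desc_disjoint) auto
  qed
qed (simp add: finite_desc)

definition children :: "'a \<Rightarrow> 'a set" where
  "children v = {c \<in> desc v. level c = Suc (level v)}"

lemma children_layer: "children v \<subseteq> layer V E r (Suc (level v))"
  using desc_subset by (auto simp: children_def layer_def)

lemma desc_children:
  assumes v: "v \<in> V"
  shows "desc v = insert v (\<Union>(desc ` children v))"
proof (intro equalityI subsetI)
  fix u assume u: "u \<in> desc v"
  show "u \<in> insert v (\<Union>(desc ` children v))"
  proof (cases "u = v")
    case False
    have uV: "u \<in> V" and le: "level v \<le> level u" and a: "anc (level u - level v) u = v"
      using u by (auto simp: desc_def)
    have lt: "Suc (level v) \<le> level u" using le a False by (cases "level u = level v") auto
    define c where "c = anc (level u - Suc (level v)) u"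
    have c: "c \<in> V" "level c = Suc (level v)" using anc[OF uV, of "level u - Suc (level v)"] lt
      by (auto simp: c_def)
    have "anc 1 c = anc (1 + (level u - Suc (level v))) u" by (simp only: c_def anc_add)
    also have "1 + (level u - Suc (level v)) = level u - level v" using lt by simp
    finally have "c \<in> desc v" using a c by (simp add: desc_def)
    moreover have "u \<in> desc c" unfolding c_def using uV lt by (intro desc_anc) auto
    ultimately show ?thesis using c by (auto simp: children_def)
  qed simp
next
  fix u assume "u \<in> insert v (\<Union>(desc ` children v))"
  then consider "u = v" | c where "c \<in> desc v" "u \<in> desc c" by (auto simp: children_def)
  then show "u \<in> desc v" using desc_self[OF v] by cases (auto intro: desc_trans)
qed

subsection \<open>Pruned rows and subtree sums\<close>

definition pruned :: "'a set \<Rightarrow> 'a set" where "pruned S = V - \<Union>(desc ` S)"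

text \<open>A pruned set is closed under ancestors, so it is connected through the root
  as long as the root itself is not removed.\<close>
lemma pruned_anc: "w \<in> pruned S \<Longrightarrow> j \<le> level w \<Longrightarrow> anc j w \<in> pruned S"
  using anc[of w j] desc_anc[of w j] desc_trans by (fastforce simp: pruned_def)

lemma pruned_connected:
  assumes S: "\<forall>v\<in>S. 1 \<le> level v"
  shows "induces_connected E (pruned S)"
proof -
  let ?Q = "\<lambda>x y. E x y \<and> x \<in> pruned S \<and> y \<in> pruned S"
  have root_in: "r \<in> pruned S" using S root by (auto simp: pruned_def desc_def level_root)
  have up_down: "?Q\<^sup>*\<^sup>* (anc j w) w \<and> ?Q\<^sup>*\<^sup>* w (anc j w)"
    if w: "w \<in> pruned S" and "j \<le> level w" for w j
    using \<open>j \<le> level w\<close>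
  proof (induction j)
    case (Suc j)
    have "w \<in> V" using w by (simp add: pruned_def)
    then have e: "E (anc (Suc j) w) (anc j w)" using anc_edge Suc.prems by simp
    have m: "anc (Suc j) w \<in> pruned S" "anc j w \<in> pruned S" using pruned_anc[OF w] Suc.prems by auto
    have ih: "?Q\<^sup>*\<^sup>* (anc j w) w" "?Q\<^sup>*\<^sup>* w (anc j w)" using Suc by auto
    show ?case
      using converse_rtranclp_into_rtranclp[OF _ ih(1)] rtranclp.rtrancl_into_rtrancl[OF ih(2)]
        e m edge_sym by simp
  qed simp
  have to_root: "?Q\<^sup>*\<^sup>* w r \<and> ?Q\<^sup>*\<^sup>* r w" if "w \<in> pruned S" for w
    using up_down[OF that, of "level w"] anc_top[of w] that by (simp add: pruned_def)
  show ?thesis unfolding induces_connected_def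
  proof (intro conjI ballI)
    fix u v assume "u \<in> pruned S" "v \<in> pruned S"
    then show "?Q\<^sup>*\<^sup>* u v" using to_root rtranclp_trans[of ?Q u r v] by blast
  qed (use root_in in blast)
qed

definition ssum :: "('a \<Rightarrow> real) \<Rightarrow> 'a \<Rightarrow> real" where "ssum x v = sum x (desc v)"

lemma sum_pruned:
  assumes "S \<subseteq> layer V E r i"
  shows "sum x (pruned S) = sum x V - (\<Sum>v\<in>S. ssum x v)"
proof -
  have "sum x (\<Union>(desc ` S)) = (\<Sum>v\<in>S. ssum x v)"
    unfolding ssum_def by (rule sum_desc_union[OF assms])
  moreover have "\<Union>(desc ` S) \<subseteq> V" using desc_subset by blast
  ultimately show ?thesis unfolding pruned_def using sum_diff[OF finite_V, of _ x] by simp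
qed

text \<open>A vector is determined by its subtree sums: x w = ssum x w minus the
  subtree sums at the children of w.\<close>
lemma ssum_children: "w \<in> V \<Longrightarrow> ssum x w = x w + (\<Sum>c\<in>children w. ssum x c)"
proof -
  assume w: "w \<in> V"
  have "\<Union>(desc ` children w) \<subseteq> V" using desc_subset by blast
  then have fin: "finite (\<Union>(desc ` children w))" using finite_V by (rule finite_subset)
  have "w \<notin> desc c" if "c \<in> children w" for c
    using that by (simp add: children_def desc_def)
  then have "w \<notin> \<Union>(desc ` children w)" by blast
  then have "sum x (insert w (\<Union>(desc ` children w))) = x w + sum x (\<Union>(desc ` children w))"
    by (rule sum.insert[OF fin])
  also have "sum x (\<Union>(desc ` children w)) = (\<Sum>c\<in>children w. ssum x c)"
    unfolding ssum_def by (rule sum_desc_union[OF children_layer])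
  finally show ?thesis using desc_children[OF w] by (simp only: ssum_def)
qed

lemma ssum_determines:
  assumes "\<forall>v\<in>V. ssum x1 v = ssum x2 v" "w \<in> V"
  shows "x1 w = x2 w"
proof -
  have "children w \<subseteq> V" using desc_subset by (auto simp: children_def)
  then have "(\<Sum>c\<in>children w. ssum x1 c) = (\<Sum>c\<in>children w. ssum x2 c)"
    using assms(1) by (intro sum.cong) auto
  then show ?thesis using ssum_children[OF assms(2), of x1] ssum_children[OF assms(2), of x2] assms
    by simp
qed

text \<open>Sparsity is inherited by the subtree sums along every layer: each nonzero
  subtree sum contains a nonzero entry of x, and these entries are distinct.\<close>
lemma ssum_sparse:
  assumes sp: "sparse_vec V k x"
  shows "card {v \<in> layer V E r i. ssum x v \<noteq> 0} \<le> k"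
proof -
  let ?P = "{v \<in> layer V E r i. ssum x v \<noteq> 0}"
  define witness where "witness v = (SOME w. w \<in> desc v \<and> x w \<noteq> 0)" for v
  have witness: "witness v \<in> desc v \<and> x (witness v) \<noteq> 0" if "v \<in> ?P" for v
  proof -
    have "sum x (desc v) \<noteq> 0" using that by (simp add: ssum_def)
    then obtain w where "w \<in> desc v" "x w \<noteq> 0" by (rule sum.not_neutral_contains_not_neutral)
    then show ?thesis unfolding witness_def by (rule someI[of "\<lambda>w. w \<in> desc v \<and> x w \<noteq> 0" w, OF conjI])
  qed
  have inj: "inj_on witness ?P"
  proof (rule inj_onI)
    fix a b assume a: "a \<in> ?P" and b: "b \<in> ?P" and eq: "witness a = witness b"
    have level: "level a = level b" using a b by (simp add: layer_def)
    have common: "witness a \<in> desc a \<inter> desc b" using witness[OF a] witness[OF b] eq by simp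
    show "a = b"
    proof (rule ccontr)
      assume "a \<noteq> b"
      then have "desc a \<inter> desc b = {}" by (rule desc_disjoint[OF level])
      then show False using common by simp
    qed
  qed
  have sub: "witness ` ?P \<subseteq> {v \<in> V. x v \<noteq> 0}"
  proof
    fix u assume "u \<in> witness ` ?P"
    then obtain v where v: "v \<in> ?P" "u = witness v" by blast
    then show "u \<in> {v \<in> V. x v \<noteq> 0}" using witness[OF v(1)] desc_subset by auto
  qed
  have "card ?P \<le> card {v \<in> V. x v \<noteq> 0}"
    by (rule card_inj_on_le[OF inj sub]) (simp add: finite_V)
  then show ?thesis using sp by (simp add: sparse_vec_def)
qed

lemma layer_0: "layer V E r 0 = {r}"
  using root level_root level_eq_0 by (auto simp: layer_def)

lemma level_le_depth: "v \<in> V \<Longrightarrow> level v \<le> depth V E r"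
  unfolding depth_def using finite_V by simp

lemma layer_enumeration: "\<exists>g. \<forall>i. bij_betw (g i) {..<card (layer V E r i)} (layer V E r i)"
  using ex_bij_betw_nat_finite[OF finite_layer] by (intro choice allI) (simp add: atLeast0LessThan)

lemma layer_recovery:
  fixes g :: "nat \<Rightarrow> 'a" and A :: "nat set list" and x1 x2 :: "'a \<Rightarrow> real"
  assumes bij: "bij_betw g {..<card (layer V E r i)} (layer V E r i)"
    and zo: "zero_one_matrix {..<card (layer V E r i)} A"
    and id: "identifies {..<card (layer V E r i)} k A"
    and s1: "sparse_vec V k x1" and s2: "sparse_vec V k x2"
    and total: "sum x1 V = sum x2 V"
    and rows: "\<forall>S\<in>set A. sum x1 (pruned (g ` S)) = sum x2 (pruned (g ` S))"
    and v: "v \<in> layer V E r i"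
  shows "ssum x1 v = ssum x2 v"
proof -
  let ?L = "layer V E r i"
  define y where "y x u = (if u \<in> ?L then ssum x u else 0)" for x u
  have y_sparse: "sparse_vec ?L k (y x)" if "sparse_vec V k x" for x
  proof -
    have "{u \<in> ?L. y x u \<noteq> 0} = {u \<in> ?L. ssum x u \<noteq> 0}" by (auto simp: y_def)
    then show ?thesis using ssum_sparse[OF that, of i] by (simp add: sparse_vec_def y_def)
  qed
  have "\<forall>T\<in>set (map ((`) g) A). sum (y x1) T = sum (y x2) T"
  proof
    fix T assume "T \<in> set (map ((`) g) A)"
    then obtain S where S: "S \<in> set A" "T = g ` S" by auto
    have T: "T \<subseteq> ?L" using zo S bij_betw_imp_surj_on[OF bij] by (auto simp: zero_one_matrix_def)
    then have "sum (y x) T = (\<Sum>u\<in>T. ssum x u)" for x by (intro sum.cong) (auto simp: y_def)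
    then show "sum (y x1) T = sum (y x2) T"
      using rows S total sum_pruned[OF T, of x1] sum_pruned[OF T, of x2] by simp
  qed
  then have "y x1 = y x2"
    by (rule identifiesD[OF identifies_relabel[OF bij zo id] y_sparse[OF s1] y_sparse[OF s2]])
  then have "y x1 v = y x2 v" by simp
  then show ?thesis using v by (simp add: y_def)
qed

subsection \<open>The layered measurement matrix\<close>

definition layered_matrix :: "(nat \<Rightarrow> nat \<Rightarrow> 'a) \<Rightarrow> (nat \<Rightarrow> nat set list) \<Rightarrow> nat \<Rightarrow> 'a set list"
  where "layered_matrix g A h = V # concat (map (\<lambda>i. map (\<lambda>S. pruned (g i ` S)) (A i)) [1..<Suc h])"

lemma length_layered_matrix:
  "length (layered_matrix g A h) = 1 + (\<Sum>i = 1..h. length (A i))"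
proof -
  have "length (layered_matrix g A h) = 1 + sum_list (map (\<lambda>i. length (A i)) [1..<Suc h])"
    by (simp add: layered_matrix_def length_concat comp_def)
  also have "\<dots> = 1 + (\<Sum>i\<in>{1..<Suc h}. length (A i))"
    by (simp only: sum_set_upt_conv_sum_list_nat[symmetric] set_upt)
  also have "\<dots> = 1 + (\<Sum>i = 1..h. length (A i))"
    by (simp only: atLeastLessThanSuc_atLeastAtMost)
  finally show ?thesis .
qed

lemma set_layered_matrix:
  "set (layered_matrix g A h) = insert V (\<Union>i\<in>{1..h}. (\<lambda>S. pruned (g i ` S)) ` set (A i))"
  unfolding layered_matrix_def
  by (simp add: image_image atLeastLessThanSuc_atLeastAtMost del: upt_Suc)

lemma layered_matrix_measurement:
  assumes "\<forall>i\<in>{1..h}. bij_betw (g i) {..<card (layer V E r i)} (layer V E r i) \<and>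
      zero_one_matrix {..<card (layer V E r i)} (A i)"
  shows "measurement_matrix V E (layered_matrix g A h)"
proof -
  have "R \<subseteq> V \<and> induces_connected E R" if "R \<in> set (layered_matrix g A h)" for R
  proof -
    from that consider "R = V" | i S where "i \<in> {1..h}" "S \<in> set (A i)" "R = pruned (g i ` S)"
      unfolding set_layered_matrix by blast
    then show ?thesis
    proof cases
      case 2
      have "g i ` S \<subseteq> layer V E r i"
        using assms 2 bij_betw_imp_surj_on by (fastforce simp: zero_one_matrix_def)
      then have "\<forall>v\<in>g i ` S. 1 \<le> level v" using 2(1) by (auto simp: layer_def)
      then have "induces_connected E R" unfolding 2(3) by (rule pruned_connected)
      then show ?thesis using 2(3) by (simp add: pruned_def)
    qed (use connected in simp)
  qed
  then show ?thesis unfolding measurement_matrix_def zero_one_matrix_def by blast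
qed

text \<open>Identification: the row V gives the total, which is the subtree sum at the
  root; layer_recovery gives the subtree sums on every further layer, and these
  determine the vector.\<close>
lemma layered_matrix_identifies:
  assumes codes: "\<forall>i\<in>{1..h}. bij_betw (g i) {..<card (layer V E r i)} (layer V E r i) \<and>
      zero_one_matrix {..<card (layer V E r i)} (A i) \<and> identifies {..<card (layer V E r i)} k (A i)"
    and depth: "\<forall>v\<in>V. level v \<le> h"
  shows "identifies V k (layered_matrix g A h)"
  unfolding identifies_iff
proof (intro allI impI ext, elim conjE)
  fix x1 x2 :: "'a \<Rightarrow> real" and w
  assume s1: "sparse_vec V k x1" and s2: "sparse_vec V k x2"
    and rows: "\<forall>R\<in>set (layered_matrix g A h). sum x1 R = sum x2 R"
  have total: "sum x1 V = sum x2 V" using rows by (simp add: set_layered_matrix)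
  have ssum_eq: "ssum x1 v = ssum x2 v" if v: "v \<in> V" for v
  proof (cases "level v = 0")
    case True
    then show ?thesis using level_eq_0[OF v] total desc_root by (simp add: ssum_def)
  next
    case False
    let ?i = "level v"
    have i: "?i \<in> {1..h}" using False depth v by auto
    have code: "bij_betw (g ?i) {..<card (layer V E r ?i)} (layer V E r ?i)"
      "zero_one_matrix {..<card (layer V E r ?i)} (A ?i)"
      "identifies {..<card (layer V E r ?i)} k (A ?i)"
      using codes i by blast+
    have "\<forall>S\<in>set (A ?i). sum x1 (pruned (g ?i ` S)) = sum x2 (pruned (g ?i ` S))"
      using rows i by (auto simp: set_layered_matrix)
    moreover have "v \<in> layer V E r ?i" using v by (simp add: layer_def)
    ultimately show ?thesis by (rule layer_recovery[OF code s1 s2 total])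
  qed
  show "x1 w = x2 w"
  proof (cases "w \<in> V")
    case True
    then show ?thesis using ssum_eq by (intro ssum_determines) auto
  next
    case False
    then show ?thesis using s1 s2 by (simp add: sparse_vec_def)
  qed
qed

end

lemma tree_rooted_graph: "is_tree V E \<Longrightarrow> r \<in> V \<Longrightarrow> rooted_graph V E r"
  by unfold_locales (auto simp: is_tree_def)

theorem theorem6:
  fixes V :: "'a set" and E :: "'a \<Rightarrow> 'a \<Rightarrow> bool" and r :: 'a and k :: nat
  assumes "is_tree V E" and "r \<in> V" and "k \<ge> 1"
  shows "M_G V E k \<le> (\<Sum>i = 0..depth V E r. M_C k (card (layer V E r i)))"
proof -
  interpret rooted_graph V E r using assms(1,2) by (rule tree_rooted_graph)
  let ?h = "depth V E r" and ?n = "\<lambda>i. card (layer V E r i)"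
  from layer_enumeration obtain g where g: "\<forall>i. bij_betw (g i) {..<?n i} (layer V E r i)" ..
  have "\<exists>A. \<forall>i. length (A i) = M_C k (?n i) \<and> zero_one_matrix {..<?n i} (A i)
      \<and> identifies {..<?n i} k (A i)"
    by (intro choice allI) (rule M_C_attained)
  then obtain A where A: "\<forall>i. length (A i) = M_C k (?n i) \<and> zero_one_matrix {..<?n i} (A i)
      \<and> identifies {..<?n i} k (A i)" ..
  have codes: "\<forall>i\<in>{1..?h}. bij_betw (g i) {..<?n i} (layer V E r i) \<and>
      zero_one_matrix {..<?n i} (A i) \<and> identifies {..<?n i} k (A i)"
    using g A by simp
  let ?B = "layered_matrix g A ?h"
  have "measurement_matrix V E ?B" by (rule layered_matrix_measurement) (use codes in simp)
  moreover have "identifies V k ?B"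
    by (rule layered_matrix_identifies[OF codes]) (use level_le_depth in simp)
  ultimately have "M_G V E k \<le> length ?B" by (rule M_G_le)
  also have "\<dots> = 1 + (\<Sum>i = 1..?h. M_C k (?n i))"
    using A by (simp add: length_layered_matrix)
  also have "\<dots> \<le> (\<Sum>i = 0..?h. M_C k (?n i))"
    using M_C_pos[OF assms(3), of "?n 0"] by (simp add: layer_0 sum.atLeast_Suc_atMost)
  finally show ?thesis .
qed

end
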